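(* Let $Q$ be a TC-query with timing sequence $\{\epsilon_1,\dots,\epsilon_k\}$ and expansion list $L=\{L^1,\dots,L^k\}$, where $L^j$ stores $\Omega(Preq(\epsilon_j))$ in the current snapshot. Suppose an incoming edge $\sigma$ (which has the largest timestamp in the current window) matches query edge $\epsilon_i$. Then, among the items of $L$, only the partial matches of $L^i$ (i.e., of $Preq(\epsilon_i)$) need to be updated due to $\sigma$ playing the role of $\epsilon_i$. Moreover: (1) if $i=1$, $\sigma$ is inserted into $L^1$ as a new match of $Preq(\epsilon_1)=\{\epsilon_1\}$; (2) if $i\neq 1$ and $\Omega(L^{i-1})\bowtie\{\sigma\}\neq\emptyset$, then $\Omega(L^{i-1})\bowtie\{\sigma\}$ is inserted into $L^i$ as the new matches of $Preq(\epsilon_i)$, where $\Omega(L^{i-1})$ is the set of partial matches stored in $L^{i-1}$.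
   Context: Streaming graph: a growing sequence of labelled directed edges $\sigma_1,\sigma_2,\dots$ with strictly increasing timestamps; with a window of duration $|W|$, the snapshot at time $t$ contains the edges with timestamps in $(t-|W|,t]$. A query $Q=(V(Q),E(Q),L,\prec)$ has a vertex labelling and a strict partial order $\prec$ (timing order) on its directed edges. A time-constrained match of a (sub)query is a subgraph $g$ of the snapshot with a label-preserving bijection $F$ from query vertices to $V(g)$ such that $\overrightarrow{uv}$ is a query edge iff $\overrightarrow{F(u)F(v)}\in E(g)$, and $\epsilon\prec\epsilon'$ implies the data edge matched to $\epsilon$ has smaller timestamp than that matched to $\epsilon'$. $\Omega(Q')$ denotes the set of matches of subquery $Q'$ in the current snapshot. For subqueries $Q^1,Q^2$ with matches $g_1,g_2$ via $F_1,F_2$, $g_1$ and $g_2$ are compatible if $g_1\cup g_2$ is a time-constrained match of $Q^1\cup Q^2$ via the bijection $F_1\cup F_2$; $\Omega(Q^1)\bowtie\Omega(Q^2)=\{g_1\cup g_2: g_1\in\Omega(Q^1),g_2\in\Omega(Q^2), g_1,g_2 \text{ compatible}\}$ (here $\{\sigma\}$ is regarded as a match of the single-edge subquery $\{\epsilon_i\}$). For $\epsilon\in E(Q)$, $Preq(\epsilon)$ is the subquery induced by $\{\epsilon':\epsilon'\prec\epsilon\}\cup\{\epsilon\}$. A prefix-connected sequence of $Q$ is an ordering $\epsilon_1,\dots,\epsilon_k$ of all edges of $Q$ such that for each $j$ the subquery induced by $\epsilon_1,\dots,\epsilon_j$ is weakly connected. $Q$ is a TC-query (timing-connected query) if it has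 a prefix-connected sequence with $\epsilon_j\prec\epsilon_{j+1}$ for all $j\in[1,k-1]$; this sequence is its timing sequence. The expansion list of a TC-query is $L=\{L^1,\dots,L^k\}$, where item $L^i$ corresponds to the subquery $\{\epsilon_1,\dots,\epsilon_i\}$ (which equals $Preq(\epsilon_i)$) and records the set $\Omega(L^i)$ of its time-constrained matches in the current snapshot. *)

theory Defs
  imports Complex_Main
begin

text \<open>A data edge is (timestamp, source, target). Edge labels play no role for
  queries (queries carry only a vertex labelling), so they are omitted.\<close>
type_synonym 'v dedge = "real \<times> 'v \<times> 'v"

definition ts :: "'v dedge \<Rightarrow> real" where "ts e = fst e"
definition src :: "'v dedge \<Rightarrow> 'v" where "src e = fst (snd e)"
definition tgt :: "'v dedge \<Rightarrow> 'v" where "tgt e = snd (snd e)"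

definition valid_stream :: "(nat \<Rightarrow> 'v dedge) \<Rightarrow> bool" where
  "valid_stream s \<longleftrightarrow> strict_mono (\<lambda>n. ts (s n))"

definition snapshot :: "(nat \<Rightarrow> 'v dedge) \<Rightarrow> real \<Rightarrow> real \<Rightarrow> 'v dedge set" where
  "snapshot s W t = {s n | n. t - W < ts (s n) \<and> ts (s n) \<le> t}"

type_synonym 'q qedge = "'q \<times> 'q"

definition qverts :: "'q qedge set \<Rightarrow> 'q set" where
  "qverts E = fst ` E \<union> snd ` E"

definition weakly_connected :: "'q qedge set \<Rightarrow> bool" where
  "weakly_connected E \<longleftrightarrow> (\<forall>u\<in>qverts E. \<forall>v\<in>qverts E. (u, v) \<in> (E \<union> E\<inverse>)\<^sup>*)"

definition is_query :: "'q set \<Rightarrow> 'q qedge set \<Rightarrow> ('q qedge \<Rightarrow> 'q qedge \<Rightarrow> bool) \<Rightarrow> bool" where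
  "is_query VQ EQ prec \<longleftrightarrow> finite VQ \<and> EQ \<subseteq> VQ \<times> VQ
     \<and> (\<forall>a b. prec a b \<longrightarrow> a \<in> EQ \<and> b \<in> EQ)
     \<and> (\<forall>a. \<not> prec a a)
     \<and> (\<forall>a b c. prec a b \<longrightarrow> prec b c \<longrightarrow> prec a c)"

definition prefix_connected :: "'q qedge set \<Rightarrow> 'q qedge list \<Rightarrow> bool" where
  "prefix_connected EQ es \<longleftrightarrow> distinct es \<and> set es = EQ
     \<and> (\<forall>j\<in>{1..length es}. weakly_connected (set (take j es)))"

definition timing_sequence :: "'q qedge set \<Rightarrow> ('q qedge \<Rightarrow> 'q qedge \<Rightarrow> bool) \<Rightarrow> 'q qedge list \<Rightarrow> bool" where
  "timing_sequence EQ prec es \<longleftrightarrow> prefix_connected EQ es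
     \<and> (\<forall>j. j + 1 < length es \<longrightarrow> prec (es ! j) (es ! (j + 1)))"

definition TC_query :: "'q set \<Rightarrow> 'q qedge set \<Rightarrow> ('q qedge \<Rightarrow> 'q qedge \<Rightarrow> bool) \<Rightarrow> bool" where
  "TC_query VQ EQ prec \<longleftrightarrow> is_query VQ EQ prec \<and> (\<exists>es. timing_sequence EQ prec es)"

text \<open>Item L^j (1-based) of the expansion list: the subquery {eps_1, ..., eps_j}.\<close>
definition expansion_item :: "'q qedge list \<Rightarrow> nat \<Rightarrow> 'q qedge set" where
  "expansion_item es j = set (take j es)"

definition Preq :: "'q qedge set \<Rightarrow> ('q qedge \<Rightarrow> 'q qedge \<Rightarrow> bool) \<Rightarrow> 'q qedge \<Rightarrow> 'q qedge set" where
  "Preq EQ prec \<epsilon> = {\<epsilon>' \<in> EQ. prec \<epsilon>' \<epsilon>} \<union> {\<epsilon>}"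

text \<open>A match of the subquery with edge set E' in the data edge set D is recorded as
  the partial map M from query edges to the data edges matched to them (dom M = E');
  the matched subgraph g is ran M and the vertex bijection F is given by the endpoints.\<close>
definition is_tc_match ::
  "('v \<Rightarrow> 'l) \<Rightarrow> ('q \<Rightarrow> 'l) \<Rightarrow> ('q qedge \<Rightarrow> 'q qedge \<Rightarrow> bool) \<Rightarrow> 'v dedge set
    \<Rightarrow> 'q qedge set \<Rightarrow> ('q qedge \<rightharpoonup> 'v dedge) \<Rightarrow> bool" where
  "is_tc_match lab LQ prec D E' M \<longleftrightarrow> dom M = E'
     \<and> (\<exists>F. inj_on F (qverts E') \<and> (\<forall>u\<in>qverts E'. lab (F u) = LQ u)
          \<and> (\<forall>\<epsilon>\<in>E'. \<exists>d. M \<epsilon> = Some d \<and> d \<in> D \<and> src d = F (fst \<epsilon>) \<and> tgt d = F (snd \<epsilon>)))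
     \<and> (\<forall>\<epsilon>\<in>E'. \<forall>\<epsilon>'\<in>E'. prec \<epsilon> \<epsilon>' \<longrightarrow> ts (the (M \<epsilon>)) < ts (the (M \<epsilon>')))"

definition Omega ::
  "('v \<Rightarrow> 'l) \<Rightarrow> ('q \<Rightarrow> 'l) \<Rightarrow> ('q qedge \<Rightarrow> 'q qedge \<Rightarrow> bool) \<Rightarrow> 'v dedge set
    \<Rightarrow> 'q qedge set \<Rightarrow> ('q qedge \<rightharpoonup> 'v dedge) set" where
  "Omega lab LQ prec D E' = {M. is_tc_match lab LQ prec D E' M}"

definition compatible ::
  "('v \<Rightarrow> 'l) \<Rightarrow> ('q \<Rightarrow> 'l) \<Rightarrow> ('q qedge \<Rightarrow> 'q qedge \<Rightarrow> bool) \<Rightarrow> 'v dedge set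
    \<Rightarrow> ('q qedge \<rightharpoonup> 'v dedge) \<Rightarrow> ('q qedge \<rightharpoonup> 'v dedge) \<Rightarrow> bool" where
  "compatible lab LQ prec D M1 M2 \<longleftrightarrow>
     (\<forall>x \<in> dom M1 \<inter> dom M2. M1 x = M2 x)
     \<and> is_tc_match lab LQ prec D (dom M1 \<union> dom M2) (M1 ++ M2)"

definition join ::
  "('v \<Rightarrow> 'l) \<Rightarrow> ('q \<Rightarrow> 'l) \<Rightarrow> ('q qedge \<Rightarrow> 'q qedge \<Rightarrow> bool) \<Rightarrow> 'v dedge set
    \<Rightarrow> ('q qedge \<rightharpoonup> 'v dedge) set \<Rightarrow> ('q qedge \<rightharpoonup> 'v dedge) set \<Rightarrow> ('q qedge \<rightharpoonup> 'v dedge) set" where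
  "join lab LQ prec D A B =
     {M1 ++ M2 | M1 M2. M1 \<in> A \<and> M2 \<in> B \<and> compatible lab LQ prec D M1 M2}"

definition edge_matches :: "('v \<Rightarrow> 'l) \<Rightarrow> ('q \<Rightarrow> 'l) \<Rightarrow> 'v dedge \<Rightarrow> 'q qedge \<Rightarrow> bool" where
  "edge_matches lab LQ \<sigma> \<epsilon> \<longleftrightarrow> lab (src \<sigma>) = LQ (fst \<epsilon>) \<and> lab (tgt \<sigma>) = LQ (snd \<epsilon>)
     \<and> (src \<sigma> = tgt \<sigma> \<longleftrightarrow> fst \<epsilon> = snd \<epsilon>)"

end

theory Submission
  imports Defs
begin

text \<open>Consecutive edges of a timing sequence are \<open>\<prec>\<close>-related, so by transitivity
  \<open>\<prec>\<close> orders the whole sequence. The incoming edge \<open>\<sigma>\<close> has the largest timestamp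
  in its snapshot, so a match sending \<open>\<epsilon>\<^sub>i\<close> to \<open>\<sigma>\<close> cannot contain any later edge
  \<open>\<epsilon>\<^sub>j\<close>, \<open>j > i\<close>, whose image would have to be younger than \<open>\<sigma>\<close>; and it must
  contain \<open>\<epsilon>\<^sub>i\<close> itself. Hence only \<open>L\<^sup>i\<close> is affected. In \<open>L\<^sup>i\<close> every other
  edge precedes \<open>\<epsilon>\<^sub>i\<close>, so it is matched to a data edge strictly older than \<open>\<sigma>\<close>:
  the matches of \<open>L\<^sup>i\<close> through \<open>\<sigma>\<close> are exactly the matches of \<open>L\<^bsup>i-1\<^esup>\<close> avoiding
  \<open>\<sigma>\<close>, extended by \<open>\<epsilon>\<^sub>i \<mapsto> \<sigma>\<close>.\<close>

lemma timing_sequence_sorted_wrt: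
  assumes "is_query VQ EQ prec" "timing_sequence EQ prec es"
  shows "sorted_wrt prec es"
proof -
  have "transp prec" using assms(1) unfolding is_query_def transp_def by blast
  moreover have "successively prec es"
    using assms(2) unfolding timing_sequence_def successively_conv_nth by simp
  ultimately show ?thesis by (simp add: successively_conv_sorted_wrt)
qed

lemma nth_mem_set_take_iff:
  assumes "distinct xs" "k < length xs"
  shows "xs ! k \<in> set (take j xs) \<longleftrightarrow> k < j"
proof
  assume "xs ! k \<in> set (take j xs)"
  then obtain m where "m < j" "m < length xs" "xs ! m = xs ! k"
    by (auto simp: in_set_conv_nth)
  with assms show "k < j" using nth_eq_iff_index_eq by metis
next
  assume "k < j"
  with assms(2) show "xs ! k \<in> set (take j xs)"
    by (metis in_set_conv_nth length_take min_less_iff_conj nth_take)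
qed

lemma expansion_item_Suc:
  "k < length es \<Longrightarrow> expansion_item es (Suc k) = insert (es ! k) (expansion_item es k)"
  unfolding expansion_item_def by (simp add: take_Suc_conv_app_nth)

lemma mem_snapshot_at_own_timestamp: "W > 0 \<Longrightarrow> s n \<in> snapshot s W (ts (s n))"
  unfolding snapshot_def by auto

lemma ts_le_of_mem_snapshot: "d \<in> snapshot s W t \<Longrightarrow> ts d \<le> t"
  unfolding snapshot_def by auto

lemma tc_match_dom: "is_tc_match lab LQ prec D E M \<Longrightarrow> dom M = E"
  unfolding is_tc_match_def by simp

lemma tc_match_value_mem:
  assumes "is_tc_match lab LQ prec D E M" "\<epsilon> \<in> E"
  shows "\<exists>d. M \<epsilon> = Some d \<and> d \<in> D"
  using assms unfolding is_tc_match_def by blast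

lemma tc_match_ts_less:
  assumes "is_tc_match lab LQ prec D E M" "\<epsilon> \<in> E" "\<epsilon>' \<in> E" "prec \<epsilon> \<epsilon>'"
  shows "ts (the (M \<epsilon>)) < ts (the (M \<epsilon>'))"
  using assms unfolding is_tc_match_def by blast

lemma tc_match_restrict:
  assumes "is_tc_match lab LQ prec D E M" "E' \<subseteq> E" "\<forall>\<epsilon>\<in>E'. the (M \<epsilon>) \<in> D'"
  shows "is_tc_match lab LQ prec D' E' (M |` E')"
proof -
  obtain F where F: "inj_on F (qverts E)" "\<forall>u\<in>qverts E. lab (F u) = LQ u"
    "\<forall>\<epsilon>\<in>E. \<exists>d. M \<epsilon> = Some d \<and> d \<in> D \<and> src d = F (fst \<epsilon>) \<and> tgt d = F (snd \<epsilon>)"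
    using assms(1) unfolding is_tc_match_def by blast
  have "qverts E' \<subseteq> qverts E"
    using assms(2) unfolding qverts_def by auto
  with F assms(2,3) have "inj_on F (qverts E') \<and> (\<forall>u\<in>qverts E'. lab (F u) = LQ u)
      \<and> (\<forall>\<epsilon>\<in>E'. \<exists>d. (M |` E') \<epsilon> = Some d \<and> d \<in> D' \<and> src d = F (fst \<epsilon>) \<and> tgt d = F (snd \<epsilon>))"
    using inj_on_subset by fastforce
  moreover have "\<forall>\<epsilon>\<in>E'. \<forall>\<epsilon>'\<in>E'. prec \<epsilon> \<epsilon>' \<longrightarrow> ts (the ((M |` E') \<epsilon>)) < ts (the ((M |` E') \<epsilon>'))"
    using tc_match_ts_less[OF assms(1)] assms(2) by (simp add: subsetD)
  moreover have "dom (M |` E') = E'"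
    using tc_match_dom[OF assms(1)] assms(2) by auto
  ultimately show ?thesis unfolding is_tc_match_def by blast
qed

lemma tc_match_single_edge:
  assumes "edge_matches lab LQ \<sigma> \<epsilon>" "\<sigma> \<in> D" "\<not> prec \<epsilon> \<epsilon>"
  shows "is_tc_match lab LQ prec D {\<epsilon>} [\<epsilon> \<mapsto> \<sigma>]"
proof -
  have labels: "lab (src \<sigma>) = LQ (fst \<epsilon>)" "lab (tgt \<sigma>) = LQ (snd \<epsilon>)"
    and loop: "src \<sigma> = tgt \<sigma> \<longleftrightarrow> fst \<epsilon> = snd \<epsilon>"
    using assms(1) unfolding edge_matches_def by auto
  define F where "F u = (if u = fst \<epsilon> then src \<sigma> else tgt \<sigma>)" for u
  have F: "F (fst \<epsilon>) = src \<sigma>" "F (snd \<epsilon>) = tgt \<sigma>"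
    using loop unfolding F_def by auto
  have "qverts {\<epsilon>} = {fst \<epsilon>, snd \<epsilon>}"
    unfolding qverts_def by auto
  moreover have "inj_on F {fst \<epsilon>, snd \<epsilon>}"
    using F loop by (cases "fst \<epsilon> = snd \<epsilon>") simp_all
  ultimately show ?thesis
    unfolding is_tc_match_def using F labels assms(2,3) by (intro conjI exI[of _ F]) auto
qed

lemma tc_matches_single_edge:
  assumes "edge_matches lab LQ \<sigma> \<epsilon>" "\<sigma> \<in> D" "\<not> prec \<epsilon> \<epsilon>"
  shows "{M \<in> Omega lab LQ prec D {\<epsilon>}. M \<epsilon> = Some \<sigma>} = {[\<epsilon> \<mapsto> \<sigma>]}"
proof (intro equalityI subsetI)
  fix M assume "M \<in> {M \<in> Omega lab LQ prec D {\<epsilon>}. M \<epsilon> = Some \<sigma>}"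
  hence "dom M = {\<epsilon>}" "M \<epsilon> = Some \<sigma>"
    unfolding Omega_def by (auto dest: tc_match_dom)
  hence "M = [\<epsilon> \<mapsto> \<sigma>]" by (auto simp: fun_eq_iff)
  thus "M \<in> {[\<epsilon> \<mapsto> \<sigma>]}" by simp
qed (use tc_match_single_edge assms in \<open>simp add: Omega_def\<close>)

lemma tc_match_latest_not_prec:
  assumes "is_tc_match lab LQ prec D E M" "\<forall>d\<in>D. ts d \<le> ts \<sigma>"
    and "\<epsilon> \<in> E" "M \<epsilon> = Some \<sigma>" "\<epsilon>' \<in> E"
  shows "\<not> prec \<epsilon> \<epsilon>'"
proof
  assume "prec \<epsilon> \<epsilon>'"
  hence "ts \<sigma> < ts (the (M \<epsilon>'))"
    using tc_match_ts_less[OF assms(1,3,5)] assms(4) by simp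
  moreover obtain d where "M \<epsilon>' = Some d" "d \<in> D"
    using tc_match_value_mem[OF assms(1,5)] by blast
  ultimately show False using assms(2) by fastforce
qed

lemma tc_matches_through_edge_eq_join:
  assumes "\<epsilon> \<notin> E" "\<forall>\<epsilon>'\<in>E. prec \<epsilon>' \<epsilon>"
  shows "{M \<in> Omega lab LQ prec D (insert \<epsilon> E). M \<epsilon> = Some \<sigma>}
       = join lab LQ prec D (Omega lab LQ prec (D - {\<sigma>}) E) {[\<epsilon> \<mapsto> \<sigma>]}"
proof (intro equalityI subsetI)
  fix M assume "M \<in> {M \<in> Omega lab LQ prec D (insert \<epsilon> E). M \<epsilon> = Some \<sigma>}"
  hence M: "is_tc_match lab LQ prec D (insert \<epsilon> E) M" "M \<epsilon> = Some \<sigma>"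
    unfolding Omega_def by auto
  have "the (M \<epsilon>') \<in> D - {\<sigma>}" if "\<epsilon>' \<in> E" for \<epsilon>'
  proof -
    have "ts (the (M \<epsilon>')) < ts \<sigma>"
      using tc_match_ts_less[OF M(1)] that assms(2) M(2) by fastforce
    thus ?thesis using tc_match_value_mem[OF M(1)] that by fastforce
  qed
  hence M1: "is_tc_match lab LQ prec (D - {\<sigma>}) E (M |` E)"
    using tc_match_restrict[OF M(1)] by blast
  have M_eq: "M = (M |` E) ++ [\<epsilon> \<mapsto> \<sigma>]"
    using tc_match_dom[OF M(1)] M(2)
    by (auto simp: fun_eq_iff restrict_map_def map_add_def split: option.split)
  have "compatible lab LQ prec D (M |` E) [\<epsilon> \<mapsto> \<sigma>]"
    unfolding compatible_def using tc_match_dom[OF M1] assms(1) M(1) M_eq by auto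
  with M1 M_eq show "M \<in> join lab LQ prec D (Omega lab LQ prec (D - {\<sigma>}) E) {[\<epsilon> \<mapsto> \<sigma>]}"
    unfolding join_def Omega_def by blast
next
  fix M assume "M \<in> join lab LQ prec D (Omega lab LQ prec (D - {\<sigma>}) E) {[\<epsilon> \<mapsto> \<sigma>]}"
  then obtain M1 where "is_tc_match lab LQ prec (D - {\<sigma>}) E M1"
      "compatible lab LQ prec D M1 [\<epsilon> \<mapsto> \<sigma>]" "M = M1 ++ [\<epsilon> \<mapsto> \<sigma>]"
    unfolding join_def Omega_def by auto
  thus "M \<in> {M \<in> Omega lab LQ prec D (insert \<epsilon> E). M \<epsilon> = Some \<sigma>}"
    unfolding compatible_def Omega_def by (auto dest: tc_match_dom)
qed

lemma prec_nth_of_mem_expansion_item: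
  assumes "sorted_wrt prec es" "\<epsilon> \<in> expansion_item es k" "k < length es"
  shows "prec \<epsilon> (es ! k)"
proof -
  obtain m where "m < k" "\<epsilon> = es ! m"
    using assms(2) unfolding expansion_item_def by (auto simp: in_set_conv_nth)
  with assms(1,3) show ?thesis by (simp add: sorted_wrt_nth_less)
qed

lemma expansion_item_latest_matches_empty:
  assumes "sorted_wrt prec es" "distinct es" "k < length es" "j \<le> length es" "j \<noteq> Suc k"
    and "\<forall>d\<in>D. ts d \<le> ts \<sigma>"
  shows "{M \<in> Omega lab LQ prec D (expansion_item es j). M (es ! k) = Some \<sigma>} = {}"
proof -
  have False if M: "is_tc_match lab LQ prec D (expansion_item es j) M" "M (es ! k) = Some \<sigma>" for M
  proof -
    have "es ! k \<in> expansion_item es j"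
      using tc_match_dom[OF M(1)] M(2) by blast
    hence "Suc k < j"
      using nth_mem_set_take_iff[OF assms(2,3)] assms(5) unfolding expansion_item_def by simp
    hence "es ! Suc k \<in> expansion_item es j"
      using nth_mem_set_take_iff[OF assms(2)] assms(4) unfolding expansion_item_def by simp
    moreover have "prec (es ! k) (es ! Suc k)"
      using assms(1,4) \<open>Suc k < j\<close> by (simp add: sorted_wrt_nth_less)
    ultimately show False
      using tc_match_latest_not_prec[OF M(1) assms(6) \<open>es ! k \<in> expansion_item es j\<close> M(2)] by blast
  qed
  thus ?thesis unfolding Omega_def by blast
qed

lemma expansion_item_latest_matches_eq_join:
  assumes "sorted_wrt prec es" "distinct es" "k < length es"
  shows "{M \<in> Omega lab LQ prec D (expansion_item es (Suc k)). M (es ! k) = Some \<sigma>}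
       = join lab LQ prec D (Omega lab LQ prec (D - {\<sigma>}) (expansion_item es k)) {[es ! k \<mapsto> \<sigma>]}"
proof -
  have "es ! k \<notin> expansion_item es k"
    using nth_mem_set_take_iff[OF assms(2,3)] unfolding expansion_item_def by simp
  moreover have "\<forall>\<epsilon>\<in>expansion_item es k. prec \<epsilon> (es ! k)"
    using prec_nth_of_mem_expansion_item[OF assms(1) _ assms(3)] by blast
  ultimately show ?thesis
    unfolding expansion_item_Suc[OF assms(3)] by (rule tc_matches_through_edge_eq_join)
qed

theorem theorem2:
  fixes s :: "nat \<Rightarrow> 'v dedge" and W :: real and n :: nat
    and lab :: "'v \<Rightarrow> 'l" and VQ :: "'q set" and EQ :: "'q qedge set"
    and LQ :: "'q \<Rightarrow> 'l" and prec :: "'q qedge \<Rightarrow> 'q qedge \<Rightarrow> bool"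
    and es :: "'q qedge list" and i :: nat
  assumes "valid_stream s" and "W > 0"
    and "TC_query VQ EQ prec" and "timing_sequence EQ prec es"
    and "1 \<le> i" and "i \<le> length es"
    and "edge_matches lab LQ (s n) (es ! (i - 1))"
  shows "(\<forall>j\<in>{1..length es}. j \<noteq> i \<longrightarrow>
            {M \<in> Omega lab LQ prec (snapshot s W (ts (s n))) (expansion_item es j).
               M (es ! (i - 1)) = Some (s n)} = {})
       \<and> (i = 1 \<longrightarrow>
            {M \<in> Omega lab LQ prec (snapshot s W (ts (s n))) (expansion_item es 1).
               M (es ! 0) = Some (s n)} = {[es ! 0 \<mapsto> s n]})
       \<and> (i \<noteq> 1 \<and>
          join lab LQ prec (snapshot s W (ts (s n)))
            (Omega lab LQ prec (snapshot s W (ts (s n)) - {s n}) (expansion_item es (i - 1)))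
            {[es ! (i - 1) \<mapsto> s n]} \<noteq> {}
          \<longrightarrow>
            {M \<in> Omega lab LQ prec (snapshot s W (ts (s n))) (expansion_item es i).
               M (es ! (i - 1)) = Some (s n)}
            = join lab LQ prec (snapshot s W (ts (s n)))
                (Omega lab LQ prec (snapshot s W (ts (s n)) - {s n}) (expansion_item es (i - 1)))
                {[es ! (i - 1) \<mapsto> s n]})"
proof -
  define D where "D = snapshot s W (ts (s n))"
  have query: "is_query VQ EQ prec" using assms(3) unfolding TC_query_def by blast
  have sorted: "sorted_wrt prec es" using timing_sequence_sorted_wrt[OF query assms(4)] .
  have distinct: "distinct es"
    using assms(4) unfolding timing_sequence_def prefix_connected_def by blast
  have latest: "\<forall>d\<in>D. ts d \<le> ts (s n)"
    unfolding D_def using ts_le_of_mem_snapshot by blast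
  have k: "i - 1 < length es" "Suc (i - 1) = i" using assms(5,6) by auto
  have "\<forall>j\<in>{1..length es}. j \<noteq> i \<longrightarrow>
      {M \<in> Omega lab LQ prec D (expansion_item es j). M (es ! (i - 1)) = Some (s n)} = {}"
  proof (intro ballI impI)
    fix j assume "j \<in> {1..length es}" "j \<noteq> i"
    then show "{M \<in> Omega lab LQ prec D (expansion_item es j). M (es ! (i - 1)) = Some (s n)} = {}"
      using k(2) by (intro expansion_item_latest_matches_empty[OF sorted distinct k(1) _ _ latest]) auto
  qed
  moreover have "{M \<in> Omega lab LQ prec D (expansion_item es 1). M (es ! 0) = Some (s n)}
      = {[es ! 0 \<mapsto> s n]}" if "i = 1"
  proof -
    have "edge_matches lab LQ (s n) (es ! 0)" using assms(7) that by simp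
    moreover have "s n \<in> D" unfolding D_def using assms(2) by (rule mem_snapshot_at_own_timestamp)
    moreover have "\<not> prec (es ! 0) (es ! 0)" using query unfolding is_query_def by blast
    ultimately have "{M \<in> Omega lab LQ prec D {es ! 0}. M (es ! 0) = Some (s n)} = {[es ! 0 \<mapsto> s n]}"
      by (rule tc_matches_single_edge)
    moreover have "expansion_item es 1 = {es ! 0}"
      using expansion_item_Suc[of 0 es] k that by (simp add: expansion_item_def)
    ultimately show ?thesis by simp
  qed
  moreover have "{M \<in> Omega lab LQ prec D (expansion_item es i). M (es ! (i - 1)) = Some (s n)}
      = join lab LQ prec D (Omega lab LQ prec (D - {s n}) (expansion_item es (i - 1)))
          {[es ! (i - 1) \<mapsto> s n]}"
    using expansion_item_latest_matches_eq_join[OF sorted distinct k(1)] unfolding k(2) .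
  ultimately show ?thesis unfolding D_def by blast
qed

end
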